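(* Let $n$ and $k$ be odd integers with $k\ge 3$ and $n>2k+1$. Then there is a homomorphism $\mathrm{Pet}(n,k)\to C_n^{\,k}$.
   Context: For integers $n,k$ with $2<2k\le n$, the generalized Petersen graph $\mathrm{Pet}(n,k)$ has vertex set $\{u_0,\dots,u_{n-1}\}\cup\{v_0,\dots,v_{n-1}\}$ and edge set $\{u_iu_{i+1}\}\cup\{u_iv_i\}\cup\{v_iv_{i+k}\}$, indices modulo $n$. $C_n$ is the cycle of length $n$. For a graph $G$ and positive integer $m$, the power graph $G^m$ has vertex set $V(G)$, two distinct vertices being adjacent iff there is a walk of length exactly $m$ between them in $G$. A homomorphism $G\to H$ is a map $V(G)\to V(H)$ sending edges to edges. *)

theory Defs
  imports Main
begin

type_synonym 'a graph = "'a set \<times> ('a \<Rightarrow> 'a \<Rightarrow> bool)"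

definition verts :: "'a graph \<Rightarrow> 'a set" where "verts G = fst G"
definition adj :: "'a graph \<Rightarrow> 'a \<Rightarrow> 'a \<Rightarrow> bool" where "adj G = snd G"

text \<open>Generalized Petersen graph Pet(n,k): vertex (False,i) is u_i, (True,i) is v_i.\<close>

definition pet_edge :: "nat \<Rightarrow> nat \<Rightarrow> bool \<times> nat \<Rightarrow> bool \<times> nat \<Rightarrow> bool" where
  "pet_edge n k x y \<longleftrightarrow>
     (\<exists>i<n. (x = (False, i) \<and> y = (False, (i + 1) mod n))
          \<or> (x = (False, i) \<and> y = (True, i))
          \<or> (x = (True, i) \<and> y = (True, (i + k) mod n)))"

definition Pet :: "nat \<Rightarrow> nat \<Rightarrow> (bool \<times> nat) graph" where
  "Pet n k = ({p. snd p < n}, (\<lambda>x y. pet_edge n k x y \<or> pet_edge n k y x))"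

definition cycle_graph :: "nat \<Rightarrow> nat graph" where
  "cycle_graph n = ({..<n}, (\<lambda>i j. i < n \<and> j < n \<and> (j = (i + 1) mod n \<or> i = (j + 1) mod n)))"

definition is_walk :: "'a graph \<Rightarrow> 'a list \<Rightarrow> bool" where
  "is_walk G xs \<longleftrightarrow> xs \<noteq> [] \<and> set xs \<subseteq> verts G \<and>
     (\<forall>i. Suc i < length xs \<longrightarrow> adj G (xs ! i) (xs ! Suc i))"

definition walk_of_length :: "'a graph \<Rightarrow> nat \<Rightarrow> 'a \<Rightarrow> 'a \<Rightarrow> bool" where
  "walk_of_length G m x y \<longleftrightarrow>
     (\<exists>xs. is_walk G xs \<and> length xs = m + 1 \<and> hd xs = x \<and> last xs = y)"

definition power_graph :: "'a graph \<Rightarrow> nat \<Rightarrow> 'a graph" where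
  "power_graph G m = (verts G, (\<lambda>x y. x \<noteq> y \<and> walk_of_length G m x y))"

definition graph_hom :: "'a graph \<Rightarrow> 'b graph \<Rightarrow> ('a \<Rightarrow> 'b) \<Rightarrow> bool" where
  "graph_hom G H f \<longleftrightarrow>
     (\<forall>x\<in>verts G. f x \<in> verts H) \<and>
     (\<forall>x\<in>verts G. \<forall>y\<in>verts G. adj G x y \<longrightarrow> adj H (f x) (f y))"

end

theory Submission
  imports Defs
begin

text \<open>Send u_i to i and v_i to i+1. Every edge of Pet(n,k) is then mapped to a pair of
  vertices of C_n at offset 1 or k. For odd k these pairs are joined by walks of length
  exactly k: walk the offset and then go back and forth along one edge for the remaining
  even number of steps.\<close>

lemma walk_of_length_rev:
  assumes sym: "\<And>x y. adj G x y \<Longrightarrow> adj G y x"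
    and "walk_of_length G m x y"
  shows "walk_of_length G m y x"
proof -
  obtain xs where xs: "is_walk G xs" "length xs = m + 1" "hd xs = x" "last xs = y"
    using assms(2) unfolding walk_of_length_def by blast
  have "is_walk G (rev xs)"
    unfolding is_walk_def
  proof (intro conjI allI impI)
    show "rev xs \<noteq> []" "set (rev xs) \<subseteq> verts G"
      using xs(1) by (auto simp: is_walk_def)
  next
    fix i assume i: "Suc i < length (rev xs)"
    have "adj G (xs ! (length xs - Suc (Suc i))) (xs ! Suc (length xs - Suc (Suc i)))"
      using xs(1) i unfolding is_walk_def by simp
    moreover have "Suc (length xs - Suc (Suc i)) = length xs - Suc i"
      using i by simp
    ultimately show "adj G (rev xs ! i) (rev xs ! Suc i)"
      using i sym by (simp add: rev_nth)
  qed
  moreover have "hd (rev xs) = y" "last (rev xs) = x"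
    using xs by (auto simp: hd_rev last_rev)
  ultimately show ?thesis
    unfolding walk_of_length_def using xs(2) by force
qed

lemma cycle_graph_adj_sym: "adj (cycle_graph n) i j \<Longrightarrow> adj (cycle_graph n) j i"
  by (auto simp: adj_def cycle_graph_def)

lemma power_graph_cycle_graph_adj_sym:
  "adj (power_graph (cycle_graph n) m) i j \<Longrightarrow> adj (power_graph (cycle_graph n) m) j i"
  using walk_of_length_rev[OF cycle_graph_adj_sym]
  by (auto simp: adj_def power_graph_def)

lemma walk_of_length_cycle_graph:
  assumes "n > 0"
    and step: "\<And>s. s < m \<Longrightarrow> p (Suc s) = Suc (p s) \<or> p s = Suc (p (Suc s))"
  shows "walk_of_length (cycle_graph n) m (p 0 mod n) (p m mod n)"
proof -
  define xs where "xs = map (\<lambda>s. p s mod n) [0..<m+1]"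
  have len: "length xs = m + 1" by (simp add: xs_def)
  have nth: "xs ! s = p s mod n" if "s < m + 1" for s
    using that by (simp add: xs_def del: upt_Suc)
  have "is_walk (cycle_graph n) xs"
    unfolding is_walk_def
  proof (intro conjI allI impI)
    show "xs \<noteq> []" using len by auto
    show "set xs \<subseteq> verts (cycle_graph n)"
      using \<open>n > 0\<close> by (auto simp: xs_def verts_def cycle_graph_def)
  next
    fix s assume "Suc s < length xs"
    hence "s < m" using len by simp
    with step[OF this] show "adj (cycle_graph n) (xs ! s) (xs ! Suc s)"
      using nth \<open>n > 0\<close> by (auto simp: adj_def cycle_graph_def mod_Suc_eq)
  qed
  moreover have "xs \<noteq> []" using len by auto
  then have "hd xs = p 0 mod n" "last xs = p m mod n"
    using len nth by (simp_all add: hd_conv_nth last_conv_nth)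
  ultimately show ?thesis
    unfolding walk_of_length_def using len by blast
qed

lemma power_graph_cycle_graph_adj_offset:
  assumes "0 < t" "t < n" "t \<le> m" "even (m - t)"
  shows "adj (power_graph (cycle_graph n) m) (a mod n) ((a + t) mod n)"
proof -
  have distinct: "a mod n \<noteq> (a + t) mod n"
  proof
    assume "a mod n = (a + t) mod n"
    hence "n dvd t" using mod_eq_dvd_iff_nat[of a "a + t" n] by simp
    thus False using assms by (auto dest: dvd_imp_le)
  qed
  define p where "p s = a + min s t + (s - t) mod 2" for s
  have "walk_of_length (cycle_graph n) m (p 0 mod n) (p m mod n)"
  proof (rule walk_of_length_cycle_graph)
    fix s show "p (Suc s) = Suc (p s) \<or> p s = Suc (p (Suc s))"
    proof (cases "s < t")
      case False
      hence "Suc s - t = Suc (s - t)" by simp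
      with False show ?thesis by (simp add: p_def mod_Suc)
    qed (simp add: p_def)
  qed (use assms in simp)
  moreover have "p 0 = a" "p m = a + t"
    using assms by (auto simp: p_def)
  ultimately show ?thesis
    using distinct by (simp add: adj_def power_graph_def)
qed

definition pet_to_cycle :: "nat \<Rightarrow> bool \<times> nat \<Rightarrow> nat" where
  "pet_to_cycle n x = (if fst x then (snd x + 1) mod n else snd x)"

lemma pet_edge_to_cycle_power_adj:
  assumes "odd k" "k < n" "pet_edge n k x y"
  shows "adj (power_graph (cycle_graph n) k) (pet_to_cycle n x) (pet_to_cycle n y)"
proof -
  have adj_1: "adj (power_graph (cycle_graph n) k) (a mod n) ((a + 1) mod n)" for a
    using assms odd_pos[of k] by (intro power_graph_cycle_graph_adj_offset) auto
  have adj_k: "adj (power_graph (cycle_graph n) k) (a mod n) ((a + k) mod n)" for a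
    using assms odd_pos[of k] by (intro power_graph_cycle_graph_adj_offset) auto
  obtain i where "i < n" and
    "x = (False, i) \<and> y = (False, (i + 1) mod n) \<or> x = (False, i) \<and> y = (True, i)
       \<or> x = (True, i) \<and> y = (True, (i + k) mod n)"
    using assms(3) unfolding pet_edge_def by blast
  then consider "x = (False, i)" "y = (False, (i + 1) mod n)"
    | "x = (False, i)" "y = (True, i)"
    | "x = (True, i)" "y = (True, (i + k) mod n)"
    by blast
  then show ?thesis
  proof cases
    case 3
    have "((i + k) mod n + 1) mod n = (i + 1 + k) mod n"
      by (simp add: mod_simps)
    with 3 show ?thesis using adj_k[of "i + 1"] by (simp add: pet_to_cycle_def)
  qed (use adj_1[of i] \<open>i < n\<close> in \<open>simp_all add: pet_to_cycle_def\<close>)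
qed

lemma graph_hom_Pet_cycle_power:
  assumes "odd k" "k < n"
  shows "graph_hom (Pet n k) (power_graph (cycle_graph n) k) (pet_to_cycle n)"
  unfolding graph_hom_def
proof (intro conjI ballI impI)
  fix x assume "x \<in> verts (Pet n k)"
  then show "pet_to_cycle n x \<in> verts (power_graph (cycle_graph n) k)"
    using assms by (auto simp: pet_to_cycle_def verts_def Pet_def power_graph_def cycle_graph_def)
next
  fix x y assume "adj (Pet n k) x y"
  then have "pet_edge n k x y \<or> pet_edge n k y x"
    by (simp add: adj_def Pet_def)
  then show "adj (power_graph (cycle_graph n) k) (pet_to_cycle n x) (pet_to_cycle n y)"
    using pet_edge_to_cycle_power_adj[OF assms] power_graph_cycle_graph_adj_sym by blast
qed

theorem theorem5:
  fixes n k :: nat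
  assumes "odd n" and "odd k" and "k \<ge> 3" and "n > 2 * k + 1"
  shows "\<exists>f. graph_hom (Pet n k) (power_graph (cycle_graph n) k) f"
  using graph_hom_Pet_cycle_power[of k n] assms by auto

end
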